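(* Let $(M,\circ,\mathrm{OR})$ be a free $\mathbb{D}$-module of rank 3 with scalar product and orientation, and let $x,y,z\in M\setminus\epsilon M$ satisfy $x+y+z=0$. Then $$\frac{\sin\alpha_{xy}}{|z|}=\frac{\sin\alpha_{yz}}{|x|}=\frac{\sin\alpha_{zx}}{|y|}.$$
   Context: $\mathbb{D}=\{a+\epsilon b: a,b\in\mathbb{R}\}$, $\epsilon^2=0$, $\mathfrak{Re}(a+\epsilon b)=a$; real-analytic functions are extended by $f(a+\epsilon b)=f(a)+\epsilon bf'(a)$; dual numbers with nonzero real part are invertible. Scalar product: symmetric $\mathbb{D}$-bilinear $\circ:M\times M\to\mathbb{D}$ with $\mathfrak{Re}(x\circ x)\ge0$, equality iff $x\in\epsilon M$; orientation: one of the two classes of ordered bases under $\{b'_j=A_{jk}b_k\}\sim\{b_k\}$ iff $\det\mathfrak{Re}(A)>0$. For $x\notin\epsilon M$, $|x|:=\sqrt{x\circ x}$ (positive real part). For $x,y\in M\setminus\epsilon M$ the dual angle $\Theta_{xy}$ is the unique dual number in $\{0\}\cup((0,\pi)+\epsilon\mathbb{R})\cup\{\pi\}$ with $\cos\Theta_{xy}=\frac{x\circ y}{|x|\,|y|}$, and $\alpha_{xy}:=\pi-\Theta_{xy}$. *)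

theory Defs
  imports "HOL-Analysis.Analysis"
begin

datatype dual = Dual (re: real) (du: real)

instantiation dual :: comm_ring_1
begin
definition "0 = Dual 0 0"
definition "1 = Dual 1 0"
definition "x + y = Dual (re x + re y) (du x + du y)"
definition "x - y = Dual (re x - re y) (du x - du y)"
definition "- x = Dual (- re x) (- du x)"
definition "x * y = Dual (re x * re y) (re x * du y + du x * re y)"
instance
  by standard (auto simp: zero_dual_def one_dual_def plus_dual_def minus_dual_def
      uminus_dual_def times_dual_def algebra_simps intro: dual.expand)
end

definition eps :: dual where "eps = Dual 0 1"

definition dinv :: "dual \<Rightarrow> dual" where
  "dinv x = Dual (1 / re x) (- du x / (re x)\<^sup>2)"
definition ddiv :: "dual \<Rightarrow> dual \<Rightarrow> dual" where
  "ddiv x y = x * dinv y"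

text \<open>Extensions of real-analytic functions: f(a + eps b) = f a + eps b f'(a).\<close>
definition dsin :: "dual \<Rightarrow> dual" where
  "dsin x = Dual (sin (re x)) (du x * cos (re x))"
definition dcos :: "dual \<Rightarrow> dual" where
  "dcos x = Dual (cos (re x)) (- du x * sin (re x))"
definition dsqrt :: "dual \<Rightarrow> dual" where
  "dsqrt x = Dual (sqrt (re x)) (du x / (2 * sqrt (re x)))"

definition dpi :: dual where "dpi = Dual pi 0"

type_synonym dmod = "dual ^ 3"

definition in_epsM :: "dmod \<Rightarrow> bool" where
  "in_epsM x \<longleftrightarrow> (\<exists>w. x = eps *s w)"

definition scalar_product :: "(dmod \<Rightarrow> dmod \<Rightarrow> dual) \<Rightarrow> bool" where
  "scalar_product sp \<longleftrightarrow>
     (\<forall>x y. sp x y = sp y x) \<and>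
     (\<forall>x y z. sp (x + y) z = sp x z + sp y z) \<and>
     (\<forall>c x y. sp (c *s x) y = c * sp x y) \<and>
     (\<forall>x. re (sp x x) \<ge> 0) \<and>
     (\<forall>x. re (sp x x) = 0 \<longleftrightarrow> in_epsM x)"

definition is_basis :: "(3 \<Rightarrow> dmod) \<Rightarrow> bool" where
  "is_basis b \<longleftrightarrow> (\<forall>v. \<exists>!c. v = (\<Sum>k\<in>UNIV. c k *s b k))"

definition same_orientation :: "(3 \<Rightarrow> dmod) \<Rightarrow> (3 \<Rightarrow> dmod) \<Rightarrow> bool" where
  "same_orientation b b' \<longleftrightarrow>
     (\<exists>A :: 3 \<Rightarrow> 3 \<Rightarrow> dual. (\<forall>j. b' j = (\<Sum>k\<in>UNIV. A j k *s b k)) \<and>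
        det (\<chi> j k. re (A j k)) > 0)"

definition orientation :: "(3 \<Rightarrow> dmod) set \<Rightarrow> bool" where
  "orientation OR \<longleftrightarrow>
     (\<exists>b. is_basis b \<and> OR = {b'. is_basis b' \<and> same_orientation b b'})"

definition dnorm :: "(dmod \<Rightarrow> dmod \<Rightarrow> dual) \<Rightarrow> dmod \<Rightarrow> dual" where
  "dnorm sp x = dsqrt (sp x x)"

definition dual_angle :: "(dmod \<Rightarrow> dmod \<Rightarrow> dual) \<Rightarrow> dmod \<Rightarrow> dmod \<Rightarrow> dual" where
  "dual_angle sp x y =
     (THE t. (t = 0 \<or> (0 < re t \<and> re t < pi) \<or> t = dpi) \<and>
             dcos t = ddiv (sp x y) (dnorm sp x * dnorm sp y))"

definition alpha :: "(dmod \<Rightarrow> dmod \<Rightarrow> dual) \<Rightarrow> dmod \<Rightarrow> dmod \<Rightarrow> dual" where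
  "alpha sp x y = dpi - dual_angle sp x y"

end

theory Submission
  imports Defs
begin

text \<open>Since sin^2 = 1 - cos^2, the square of sin alpha_xy / |z| is
  G(x,y) / ((x o x)(y o y)(z o z)), where G(x,y) = (x o x)(y o y) - (x o y)^2 is the
  Gram determinant. G is invariant under x \<mapsto> x + c y and under negation, so it takes
  the same value on all pairs of sides of a triangle x + y + z = 0; hence the three ratios
  have equal squares. They are also all nonnegative in the sense of having positive real part
  or being 0, and on such dual numbers squaring is injective. The dual Cauchy-Schwarz
  inequality, i.e. nonnegativity of G in this sense, is what makes the dual angle well defined.\<close>

lemma dual_eq_iff: "a = b \<longleftrightarrow> re a = re b \<and> du a = du b"
  by (cases a; cases b) auto

lemma re_du_simps [simp]:
  "re 0 = 0" "du 0 = 0" "re 1 = 1" "du 1 = 0"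
  "re (a + b) = re a + re b" "du (a + b) = du a + du b"
  "re (a - b) = re a - re b" "du (a - b) = du a - du b"
  "re (- a) = - re a" "du (- a) = - du a"
  "re (a * b) = re a * re b" "du (a * b) = re a * du b + du a * re b"
  "re eps = 0" "du eps = 1"
  by (simp_all add: zero_dual_def one_dual_def plus_dual_def minus_dual_def
      uminus_dual_def times_dual_def eps_def)

lemma re_du_power2 [simp]: "re (a\<^sup>2) = (re a)\<^sup>2" "du (a\<^sup>2) = 2 * re a * du a"
  by (simp_all add: power2_eq_square)

lemma eps_mult_eps [simp]: "eps * (eps * a) = 0"
  by (simp add: dual_eq_iff)

lemma re_dinv [simp]: "re (dinv a) = 1 / re a"
  by (simp add: dinv_def)

lemma dinv_mult: "re a \<noteq> 0 \<Longrightarrow> re b \<noteq> 0 \<Longrightarrow> dinv (a * b) = dinv a * dinv b"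
  by (simp add: dual_eq_iff dinv_def power2_eq_square field_simps)

lemma ddiv_self: "re a \<noteq> 0 \<Longrightarrow> ddiv a a = 1"
  by (simp add: dual_eq_iff ddiv_def dinv_def power2_eq_square field_simps)

lemma ddiv_diff: "ddiv a c - ddiv b c = ddiv (a - b) c"
  by (simp add: ddiv_def algebra_simps)

lemma ddiv_ddiv: "re b \<noteq> 0 \<Longrightarrow> re c \<noteq> 0 \<Longrightarrow> ddiv (ddiv a b) c = ddiv a (b * c)"
  by (simp add: ddiv_def dinv_mult mult.assoc)

lemma power2_ddiv: "re b \<noteq> 0 \<Longrightarrow> (ddiv a b)\<^sup>2 = ddiv (a\<^sup>2) (b\<^sup>2)"
  by (simp add: ddiv_def power2_eq_square dinv_mult algebra_simps)

lemma dsqrt_power2: "0 < re a \<Longrightarrow> (dsqrt a)\<^sup>2 = a"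
  by (simp add: dual_eq_iff dsqrt_def)

lemma re_dsqrt [simp]: "re (dsqrt a) = sqrt (re a)"
  by (simp add: dsqrt_def)

lemma dsin_power2_plus_dcos_power2: "(dsin t)\<^sup>2 + (dcos t)\<^sup>2 = 1"
  by (simp add: dual_eq_iff dsin_def dcos_def algebra_simps)

lemma dsin_dpi_minus: "dsin (dpi - t) = dsin t"
  by (simp add: dual_eq_iff dsin_def dpi_def)

definition dual_nonneg :: "dual \<Rightarrow> bool" where
  "dual_nonneg a \<longleftrightarrow> 0 < re a \<or> a = 0"

lemma dual_nonneg_ddiv: "dual_nonneg a \<Longrightarrow> 0 < re b \<Longrightarrow> dual_nonneg (ddiv a b)"
  by (auto simp: dual_nonneg_def ddiv_def)

lemma dual_nonneg_power2_inj:
  assumes "dual_nonneg a" "dual_nonneg b" "a\<^sup>2 = b\<^sup>2"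
  shows "a = b"
proof -
  have re: "(re a)\<^sup>2 = (re b)\<^sup>2" and du: "re a * du a = re b * du b"
    using arg_cong[OF assms(3), of re] arg_cong[OF assms(3), of du] by simp_all
  show ?thesis
  proof (cases "a = 0 \<or> b = 0")
    case True
    with re assms(1,2) show ?thesis by (auto simp: dual_nonneg_def)
  next
    case False
    with assms(1,2) have "0 < re a" "0 < re b" by (auto simp: dual_nonneg_def)
    with re have "re a = re b" by (simp add: power2_eq_imp_eq)
    with du \<open>0 < re a\<close> show ?thesis by (simp add: dual_eq_iff)
  qed
qed

lemma dual_nonneg_one_minus_power2:
  assumes "dual_nonneg (1 - c\<^sup>2)"
  shows "\<bar>re c\<bar> \<le> 1" "\<bar>re c\<bar> = 1 \<Longrightarrow> du c = 0"
  using assms by (auto simp: dual_nonneg_def dual_eq_iff abs_square_less_1 abs_square_eq_1)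

definition dual_arccos :: "dual \<Rightarrow> dual" where
  "dual_arccos c = (THE t. (t = 0 \<or> (0 < re t \<and> re t < pi) \<or> t = dpi) \<and> dcos t = c)"

lemma dual_arccos_ex1:
  assumes "\<bar>re c\<bar> \<le> 1" "\<bar>re c\<bar> = 1 \<Longrightarrow> du c = 0"
  shows "\<exists>!t. (t = 0 \<or> (0 < re t \<and> re t < pi) \<or> t = dpi) \<and> dcos t = c"
proof (rule ex_ex1I)
  consider "re c = 1" | "re c = -1" | "\<bar>re c\<bar> < 1" using assms(1) by linarith
  then show "\<exists>t. (t = 0 \<or> (0 < re t \<and> re t < pi) \<or> t = dpi) \<and> dcos t = c"
  proof cases
    case 1
    with assms(2) show ?thesis
      by (intro exI[of _ 0]) (simp add: dual_eq_iff dcos_def)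
  next
    case 2
    with assms(2) show ?thesis
      by (intro exI[of _ dpi]) (simp add: dual_eq_iff dcos_def dpi_def)
  next
    case 3
    define a where "a = arccos (re c)"
    have "0 < a" "a < pi" "sin a \<noteq> 0"
      using 3 arccos_lt_bounded sin_arccos_nonzero by (auto simp: a_def abs_less_iff)
    with 3 show ?thesis
      by (intro exI[of _ "Dual a (- du c / sin a)"]) (simp add: dual_eq_iff dcos_def a_def abs_less_iff)
  qed
next
  fix t1 t2
  assume t1: "(t1 = 0 \<or> (0 < re t1 \<and> re t1 < pi) \<or> t1 = dpi) \<and> dcos t1 = c"
    and t2: "(t2 = 0 \<or> (0 < re t2 \<and> re t2 < pi) \<or> t2 = dpi) \<and> dcos t2 = c"
  then have "0 \<le> re t1" "re t1 \<le> pi" "0 \<le> re t2" "re t2 \<le> pi"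
    by (auto simp: dpi_def)
  moreover have "cos (re t1) = cos (re t2)"
    using t1 t2 by (auto simp: dcos_def)
  ultimately have re_eq: "re t1 = re t2"
    using cos_inj_pi by blast
  show "t1 = t2"
  proof (cases "0 < re t1 \<and> re t1 < pi")
    case True
    then have "sin (re t1) > 0" by (simp add: sin_gt_zero)
    moreover have "du t1 * sin (re t1) = du t2 * sin (re t2)"
      using t1 t2 by (auto simp: dcos_def)
    ultimately show ?thesis using re_eq by (simp add: dual_eq_iff)
  next
    case False
    with t1 t2 re_eq show ?thesis by (auto simp: dpi_def)
  qed
qed

lemma
  assumes "dual_nonneg (1 - c\<^sup>2)"
  shows dcos_dual_arccos: "dcos (dual_arccos c) = c"
    and dual_nonneg_dsin_dual_arccos: "dual_nonneg (dsin (dual_arccos c))"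
proof -
  let ?t = "dual_arccos c"
  have t: "(?t = 0 \<or> (0 < re ?t \<and> re ?t < pi) \<or> ?t = dpi) \<and> dcos ?t = c"
    unfolding dual_arccos_def
    by (rule theI' [OF dual_arccos_ex1 [OF dual_nonneg_one_minus_power2 [OF assms]]])
  then show "dcos ?t = c" by simp
  from t show "dual_nonneg (dsin ?t)"
    by (auto simp: dual_nonneg_def dsin_def dpi_def dual_eq_iff sin_gt_zero)
qed

lemma dsin_dual_arccos_power2:
  "dual_nonneg (1 - c\<^sup>2) \<Longrightarrow> (dsin (dual_arccos c))\<^sup>2 = 1 - c\<^sup>2"
  using dsin_power2_plus_dcos_power2 [of "dual_arccos c"] dcos_dual_arccos
  by (simp add: eq_diff_eq)

definition gram :: "(dmod \<Rightarrow> dmod \<Rightarrow> dual) \<Rightarrow> dmod \<Rightarrow> dmod \<Rightarrow> dual" where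
  "gram sp x y = sp x x * sp y y - (sp x y)\<^sup>2"

locale dual_scalar_product =
  fixes sp :: "dmod \<Rightarrow> dmod \<Rightarrow> dual"
  assumes scalar_product: "scalar_product sp"
begin

lemma sp_commute: "sp x y = sp y x"
  using scalar_product unfolding scalar_product_def by blast

lemma sp_add_left: "sp (x + y) z = sp x z + sp y z"
  using scalar_product unfolding scalar_product_def by blast

lemma sp_scale_left: "sp (c *s x) y = c * sp x y"
  using scalar_product unfolding scalar_product_def by blast

lemma sp_add_right: "sp x (y + z) = sp x y + sp x z"
  by (metis sp_commute sp_add_left)

lemma sp_scale_right: "sp x (c *s y) = c * sp x y"
  by (metis sp_commute sp_scale_left)

lemma sp_uminus_left: "sp (- x) y = - sp x y"
  by (metis vector_sneg_minus1 sp_scale_left mult_minus1)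

lemma sp_uminus_right: "sp x (- y) = - sp x y"
  by (metis sp_commute sp_uminus_left)

lemma sp_self_nonneg: "0 \<le> re (sp x x)"
  using scalar_product unfolding scalar_product_def by blast

lemma sp_self_re_eq_0_iff: "re (sp x x) = 0 \<longleftrightarrow> in_epsM x"
  using scalar_product unfolding scalar_product_def by blast

lemma sp_self_pos: "\<not> in_epsM x \<Longrightarrow> 0 < re (sp x x)"
  using sp_self_nonneg [of x] sp_self_re_eq_0_iff [of x] by linarith

lemma dnorm_power2: "\<not> in_epsM x \<Longrightarrow> (dnorm sp x)\<^sup>2 = sp x x"
  by (simp add: dnorm_def dsqrt_power2 sp_self_pos)

lemma re_dnorm_pos: "\<not> in_epsM x \<Longrightarrow> 0 < re (dnorm sp x)"
  by (simp add: dnorm_def sp_self_pos)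

lemma gram_commute: "gram sp x y = gram sp y x"
  by (simp add: gram_def sp_commute mult.commute)

lemma gram_add_scale: "gram sp (x + c *s y) y = gram sp x y"
  by (simp add: gram_def sp_add_left sp_add_right sp_scale_left sp_scale_right
      sp_commute [of y x] power2_eq_square algebra_simps)

lemma gram_uminus: "gram sp (- x) y = gram sp x y"
  by (simp add: gram_def sp_uminus_left sp_uminus_right)

lemma gram_eps: "gram sp (eps *s v) y = 0"
  by (simp add: gram_def sp_scale_left sp_scale_right power2_eq_square algebra_simps)

lemma gram_triangle:
  assumes "x + y + z = 0"
  shows "gram sp x y = gram sp y z"
proof -
  have "z = - (x + 1 *s y)"
    using minus_unique [OF assms] by simp
  then have "gram sp z y = gram sp x y"
    by (simp only: gram_uminus gram_add_scale)
  then show ?thesis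
    by (simp add: gram_commute [of y z])
qed

text \<open>Cauchy-Schwarz: subtracting from x the real multiple of y that kills the real
  part of sp x y leaves the Gram determinant unchanged and makes its real part a product
  of two nonnegative reals; if that product vanishes, x lies in R y + eps M, where G is 0.\<close>
lemma dual_nonneg_gram: "dual_nonneg (gram sp x y)"
proof (cases "in_epsM y")
  case True
  then obtain w where "y = eps *s w" by (auto simp: in_epsM_def)
  then show ?thesis
    by (simp add: gram_commute [of x] gram_eps dual_nonneg_def)
next
  case False
  define u where "u = x + Dual (- re (sp x y) / re (sp y y)) 0 *s y"
  have yy: "0 < re (sp y y)" using False by (rule sp_self_pos)
  have "re (sp u y) = 0"
    using yy by (simp add: u_def sp_add_left sp_scale_left)
  then have re_gram: "re (gram sp u y) = re (sp u u) * re (sp y y)"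
    by (simp add: gram_def)
  have "dual_nonneg (gram sp u y)"
  proof (cases "re (sp u u) = 0")
    case True
    then obtain v where "u = eps *s v"
      using sp_self_re_eq_0_iff by (auto simp: in_epsM_def)
    then show ?thesis by (simp add: gram_eps dual_nonneg_def)
  next
    case False
    with sp_self_nonneg [of u] have "0 < re (sp u u)" by linarith
    with yy show ?thesis by (simp add: dual_nonneg_def re_gram)
  qed
  then show ?thesis by (simp add: u_def gram_add_scale)
qed

lemma one_minus_dual_cos_power2:
  assumes "\<not> in_epsM x" "\<not> in_epsM y"
  shows "1 - (ddiv (sp x y) (dnorm sp x * dnorm sp y))\<^sup>2 = ddiv (gram sp x y) (sp x x * sp y y)"
proof -
  have norms: "re (dnorm sp x * dnorm sp y) \<noteq> 0" and prod: "re (sp x x * sp y y) \<noteq> 0"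
    using re_dnorm_pos [OF assms(1)] re_dnorm_pos [OF assms(2)]
      sp_self_pos [OF assms(1)] sp_self_pos [OF assms(2)] by simp_all
  have "(ddiv (sp x y) (dnorm sp x * dnorm sp y))\<^sup>2 = ddiv ((sp x y)\<^sup>2) (sp x x * sp y y)"
    using assms by (simp add: power2_ddiv [OF norms] power_mult_distrib dnorm_power2)
  then have "1 - (ddiv (sp x y) (dnorm sp x * dnorm sp y))\<^sup>2
      = ddiv (sp x x * sp y y) (sp x x * sp y y) - ddiv ((sp x y)\<^sup>2) (sp x x * sp y y)"
    by (simp add: ddiv_self [OF prod])
  also have "\<dots> = ddiv (gram sp x y) (sp x x * sp y y)"
    by (simp add: ddiv_diff gram_def)
  finally show ?thesis .
qed

lemma
  assumes "\<not> in_epsM x" "\<not> in_epsM y"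
  shows dsin_alpha_power2: "(dsin (alpha sp x y))\<^sup>2 = ddiv (gram sp x y) (sp x x * sp y y)"
    and dual_nonneg_dsin_alpha: "dual_nonneg (dsin (alpha sp x y))"
proof -
  define c where "c = ddiv (sp x y) (dnorm sp x * dnorm sp y)"
  have sin: "dsin (alpha sp x y) = dsin (dual_arccos c)"
    by (simp add: c_def alpha_def dsin_dpi_minus dual_angle_def dual_arccos_def)
  have c: "1 - c\<^sup>2 = ddiv (gram sp x y) (sp x x * sp y y)"
    unfolding c_def using assms by (rule one_minus_dual_cos_power2)
  have "0 < re (sp x x * sp y y)"
    using assms sp_self_pos by simp
  then have "dual_nonneg (1 - c\<^sup>2)"
    unfolding c by (intro dual_nonneg_ddiv dual_nonneg_gram)
  then show "(dsin (alpha sp x y))\<^sup>2 = ddiv (gram sp x y) (sp x x * sp y y)"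
    and "dual_nonneg (dsin (alpha sp x y))"
    by (simp_all add: sin c dsin_dual_arccos_power2 dual_nonneg_dsin_dual_arccos)
qed

lemma
  assumes "\<not> in_epsM x" "\<not> in_epsM y" "\<not> in_epsM z"
  shows sine_ratio_power2:
      "(ddiv (dsin (alpha sp x y)) (dnorm sp z))\<^sup>2 = ddiv (gram sp x y) (sp x x * sp y y * sp z z)"
    and dual_nonneg_sine_ratio: "dual_nonneg (ddiv (dsin (alpha sp x y)) (dnorm sp z))"
proof -
  have "re (dnorm sp z) \<noteq> 0" "re (sp z z) \<noteq> 0" "re (sp x x * sp y y) \<noteq> 0"
    using re_dnorm_pos [OF assms(3)] sp_self_pos [OF assms(1)] sp_self_pos [OF assms(2)]
      sp_self_pos [OF assms(3)] by simp_all
  then show "(ddiv (dsin (alpha sp x y)) (dnorm sp z))\<^sup>2 = ddiv (gram sp x y) (sp x x * sp y y * sp z z)"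
    using assms by (simp add: power2_ddiv dnorm_power2 dsin_alpha_power2 ddiv_ddiv)
  show "dual_nonneg (ddiv (dsin (alpha sp x y)) (dnorm sp z))"
    using assms by (simp add: dual_nonneg_ddiv dual_nonneg_dsin_alpha re_dnorm_pos)
qed

end

theorem theorem19:
  fixes sp :: "dmod \<Rightarrow> dmod \<Rightarrow> dual" and OR :: "(3 \<Rightarrow> dmod) set"
    and x y z :: dmod
  assumes "scalar_product sp" and "orientation OR"
    and "\<not> in_epsM x" and "\<not> in_epsM y" and "\<not> in_epsM z"
    and "x + y + z = 0"
  shows "ddiv (dsin (alpha sp x y)) (dnorm sp z) = ddiv (dsin (alpha sp y z)) (dnorm sp x)
       \<and> ddiv (dsin (alpha sp y z)) (dnorm sp x) = ddiv (dsin (alpha sp z x)) (dnorm sp y)"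
proof -
  interpret dual_scalar_product sp
    by (rule dual_scalar_product.intro) (fact assms(1))
  have "gram sp x y = gram sp y z" "gram sp y z = gram sp z x"
    using assms(6) by (simp_all add: gram_triangle ac_simps)
  moreover have "sp x x * sp y y * sp z z = sp y y * sp z z * sp x x"
    "sp y y * sp z z * sp x x = sp z z * sp x x * sp y y"
    by (simp_all add: ac_simps)
  ultimately show ?thesis
    using assms(3-5)
    by (metis dual_nonneg_power2_inj sine_ratio_power2 dual_nonneg_sine_ratio)
qed

end
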